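(* Let $s,r,R$ be positive integers and $\delta=(r+1)(R+1)-sr-1$. If $\delta\le 0$, then the ball $B(R)\subseteq\mathbb F_q^{s\times r}$ is $R$-closed with respect to the NRT metric; equivalently, for every $x\in\mathbb F_q^{s\times r}$ with $w(x)\ge R+1$ there is $c\in\mathbb F_q^{s\times r}$ with $d(c,x)\le R$ and $B(c,R)\cap B(R)=\emptyset$.
   Context: $q$ is a prime power, $\mathbb F_q^{s\times r}$ the set of $s\times r$ matrices over $\mathbb F_q$ with rows in $\mathbb F_q^{1\times r}$. For a row $y=(y_1,\dots,y_r)$, the NRT weight is $w(y)=\max\{j: y_j\neq 0\}$ if $y\neq0$ and $w(0)=0$; for a matrix, $w(x)=\sum_i w(x_i)$. The NRT metric is $d(x,y)=w(x-y)$; $B(c,R)=\{x: d(x,c)\le R\}$, $B(R)=B(0,R)$. A set is $R$-closed if its complement is a union of balls of radius $R$. *)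

theory Defs
  imports Main
begin

text \<open>Matrices in F_q^{s x r} are represented as functions nat => nat => 'a
  (row index i < s, column index j < r, 0-based) vanishing outside the box.\<close>

definition mats :: "nat \<Rightarrow> nat \<Rightarrow> (nat \<Rightarrow> nat \<Rightarrow> 'a::zero) set" where
  "mats s r = {x. \<forall>i j. (s \<le> i \<or> r \<le> j) \<longrightarrow> x i j = 0}"

definition row_wt :: "nat \<Rightarrow> (nat \<Rightarrow> 'a::zero) \<Rightarrow> nat" where
  "row_wt r y = (if \<forall>j<r. y j = 0 then 0 else Suc (GREATEST j. j < r \<and> y j \<noteq> 0))"

definition nrt_wt :: "nat \<Rightarrow> nat \<Rightarrow> (nat \<Rightarrow> nat \<Rightarrow> 'a::zero) \<Rightarrow> nat" where
  "nrt_wt s r x = (\<Sum>i<s. row_wt r (x i))"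

definition nrt_dist :: "nat \<Rightarrow> nat \<Rightarrow> (nat \<Rightarrow> nat \<Rightarrow> 'a::ab_group_add) \<Rightarrow> (nat \<Rightarrow> nat \<Rightarrow> 'a) \<Rightarrow> nat" where
  "nrt_dist s r x y = nrt_wt s r (\<lambda>i j. x i j - y i j)"

definition nrt_ball :: "nat \<Rightarrow> nat \<Rightarrow> (nat \<Rightarrow> nat \<Rightarrow> 'a::ab_group_add) \<Rightarrow> nat \<Rightarrow> (nat \<Rightarrow> nat \<Rightarrow> 'a) set" where
  "nrt_ball s r c R = {x \<in> mats s r. nrt_dist s r x c \<le> R}"

definition R_closed :: "nat \<Rightarrow> nat \<Rightarrow> nat \<Rightarrow> (nat \<Rightarrow> nat \<Rightarrow> 'a::ab_group_add) set \<Rightarrow> bool" where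
  "R_closed s r R A \<longleftrightarrow> A \<subseteq> mats s r \<and>
     (\<exists>C \<subseteq> mats s r. mats s r - A = (\<Union>c\<in>C. nrt_ball s r c R))"

end

theory Submission
  imports Defs
begin

text \<open>Given x with w(x) \<ge> R + 1, choose a set A of rows with r |A| \<ge> R whose complement
  still carries weight at least R + 1, and spend a budget of R on the rows of A: a row with
  budget g is raised to weight at least g, at distance at most g, by adding a unit in column g.
  The resulting c satisfies d(c, x) \<le> R and w(c) \<ge> 2R + 1, so B(c, R) misses B(R) by the
  triangle inequality. The set A exists when \<delta> \<le> 0, i.e. when R \<le> r m for some m with
  R + 1 + m \<le> s: either the zero rows of x already suffice, or some m rows including all
  zero rows do, and then the remaining s - m \<ge> R + 1 rows are nonzero.\<close>

lemma row_wt_le_iff: "row_wt r u \<le> n \<longleftrightarrow> (\<forall>j<r. n \<le> j \<longrightarrow> u j = 0)"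
proof (cases "\<forall>j<r. u j = 0")
  case True
  then show ?thesis by (simp add: row_wt_def)
next
  case False
  let ?P = "\<lambda>j. j < r \<and> u j \<noteq> 0"
  from False obtain j0 where "?P j0" by auto
  then have greatest: "?P (Greatest ?P)" and le_greatest: "\<And>j. ?P j \<Longrightarrow> j \<le> Greatest ?P"
    using GreatestI_nat[of ?P j0 r] Greatest_le_nat[of ?P _ r] by auto
  have "row_wt r u = Suc (Greatest ?P)"
    using False by (simp add: row_wt_def)
  then show ?thesis
    using greatest le_greatest by (auto simp: Suc_le_eq) (meson le_trans not_le)
qed

lemma less_row_wt: "j < r \<Longrightarrow> u j \<noteq> 0 \<Longrightarrow> j < row_wt r u"
  using row_wt_le_iff[of r u j] by (meson not_le order_refl)

lemma row_wt_zero [simp]: "row_wt r (\<lambda>j. 0) = 0"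
  by (simp add: row_wt_def)

lemma row_wt_add_le:
  fixes a b :: "nat \<Rightarrow> 'a::monoid_add"
  shows "row_wt r (\<lambda>j. a j + b j) \<le> row_wt r a + row_wt r b"
  unfolding row_wt_le_iff
  using row_wt_le_iff[of r a "row_wt r a"] row_wt_le_iff[of r b "row_wt r b"] by simp

lemma row_wt_minus_commute:
  fixes a b :: "nat \<Rightarrow> 'a::ab_group_add"
  shows "row_wt r (\<lambda>j. a j - b j) = row_wt r (\<lambda>j. b j - a j)"
proof -
  have "row_wt r (\<lambda>j. a j - b j) \<le> n \<longleftrightarrow> row_wt r (\<lambda>j. b j - a j) \<le> n" for n
    unfolding row_wt_le_iff by (metis eq_iff_diff_eq_0)
  then show ?thesis by (meson order_antisym order_refl)
qed

lemma nrt_dist_commute: "nrt_dist s r x y = nrt_dist s r y x"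
  unfolding nrt_dist_def nrt_wt_def by (rule sum.cong[OF refl row_wt_minus_commute])

lemma nrt_dist_zero_right [simp]: "nrt_dist s r x (\<lambda>i j. 0) = nrt_wt s r x"
  by (simp add: nrt_dist_def)

lemma nrt_dist_triangle:
  fixes x y z :: "nat \<Rightarrow> nat \<Rightarrow> 'a::ab_group_add"
  shows "nrt_dist s r x z \<le> nrt_dist s r x y + nrt_dist s r y z"
proof -
  have "row_wt r (\<lambda>j. x i j - z i j) \<le> row_wt r (\<lambda>j. x i j - y i j) + row_wt r (\<lambda>j. y i j - z i j)"
    for i
    using row_wt_add_le[of r "\<lambda>j. x i j - y i j" "\<lambda>j. y i j - z i j"] by simp
  then show ?thesis
    unfolding nrt_dist_def nrt_wt_def by (simp add: sum_mono flip: sum.distrib)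
qed

lemma nrt_ball_disjoint:
  fixes c c' :: "nat \<Rightarrow> nat \<Rightarrow> 'a::ab_group_add"
  assumes "R + R' < nrt_dist s r c c'"
  shows "nrt_ball s r c R \<inter> nrt_ball s r c' R' = {}"
proof -
  have "\<not> (nrt_dist s r y c \<le> R \<and> nrt_dist s r y c' \<le> R')" for y
    using assms nrt_dist_triangle[of s r c c' y] nrt_dist_commute[of s r c y] by linarith
  then show ?thesis
    unfolding nrt_ball_def by (force simp: not_le[symmetric])
qed

lemma R_closedI:
  assumes "A \<subseteq> mats s r"
    and "\<forall>x \<in> mats s r - A. \<exists>c \<in> mats s r. nrt_dist s r c x \<le> R \<and> nrt_ball s r c R \<inter> A = {}"
  shows "R_closed s r R A"
proof -
  let ?C = "{c \<in> mats s r. nrt_ball s r c R \<inter> A = {}}"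
  have "mats s r - A \<subseteq> (\<Union>c\<in>?C. nrt_ball s r c R)"
  proof
    fix x
    assume x: "x \<in> mats s r - A"
    with assms(2) obtain c where "c \<in> ?C" "nrt_dist s r c x \<le> R"
      by blast
    moreover have "nrt_dist s r x c = nrt_dist s r c x"
      by (rule nrt_dist_commute)
    ultimately show "x \<in> (\<Union>c\<in>?C. nrt_ball s r c R)"
      using x unfolding nrt_ball_def by auto
  qed
  moreover have "(\<Union>c\<in>?C. nrt_ball s r c R) \<subseteq> mats s r - A"
    unfolding nrt_ball_def by blast
  ultimately have "mats s r - A = (\<Union>c\<in>?C. nrt_ball s r c R)"
    by (rule subset_antisym)
  then show ?thesis
    unfolding R_closed_def by (intro conjI[OF assms(1)] exI[of _ ?C] conjI) auto
qed

lemma exists_sum_eq_bounded: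
  assumes "finite A" and "n \<le> r * card A"
  shows "\<exists>g::nat \<Rightarrow> nat. (\<forall>i\<in>A. g i \<le> r) \<and> sum g A = n"
  using assms
proof (induction A arbitrary: n rule: finite_induct)
  case empty
  then show ?case by simp
next
  case (insert a F)
  have "n \<le> r + r * card F"
    using insert.prems insert.hyps by simp
  then have "n - min n r \<le> r * card F"
    by linarith
  with insert.IH obtain g where g: "\<forall>i\<in>F. g i \<le> r" "sum g F = n - min n r"
    by blast
  have "sum (g(a := min n r)) F = sum g F"
    using insert.hyps by (intro sum.cong) auto
  then have "sum (g(a := min n r)) (insert a F) = n"
    using g(2) insert.hyps by simp
  then show ?case
    using g(1) by (intro exI[of _ "g(a := min n r)"]) auto
qed

lemma exists_row_raise:
  fixes u :: "nat \<Rightarrow> 'a::ring_1"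
  assumes "m \<le> r"
  shows "\<exists>v. (\<forall>j. r \<le> j \<longrightarrow> v j = u j) \<and> row_wt r (\<lambda>j. v j - u j) \<le> m
           \<and> m \<le> row_wt r v \<and> row_wt r u \<le> row_wt r v"
proof (cases "m \<le> row_wt r u")
  case True
  then show ?thesis by (intro exI[of _ u]) simp
next
  case False
  then have m: "0 < m" "m - 1 < r" "row_wt r u \<le> m - 1"
    using assms by linarith+
  define e where "e j = (if j = m - 1 then 1 else 0 :: 'a)" for j
  define v where "v j = u j + e j" for j
  have "u (m - 1) = 0"
    using m row_wt_le_iff[of r u "m - 1"] by blast
  then have "v (m - 1) \<noteq> 0"
    by (simp add: v_def e_def)
  then have "m \<le> row_wt r v"
    using less_row_wt[of "m - 1" r v] m by linarith
  moreover have "row_wt r (\<lambda>j. v j - u j) \<le> m"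
    using m unfolding row_wt_le_iff by (simp add: v_def e_def)
  moreover have "\<forall>j. r \<le> j \<longrightarrow> v j = u j"
    using m by (simp add: v_def e_def)
  ultimately show ?thesis
    using m by (intro exI[of _ v]) simp
qed

lemma exists_center_raising_rows:
  fixes x :: "nat \<Rightarrow> nat \<Rightarrow> 'a::ring_1"
  assumes x: "x \<in> mats s r" and A: "A \<subseteq> {..<s}" and g: "\<forall>i\<in>A. g i \<le> r"
  shows "\<exists>c \<in> mats s r. nrt_dist s r c x \<le> sum g A
           \<and> sum g A + (\<Sum>i \<in> {..<s} - A. row_wt r (x i)) \<le> nrt_wt s r c"
proof -
  have "\<forall>i\<in>A. \<exists>w. (\<forall>j. r \<le> j \<longrightarrow> w j = x i j) \<and> row_wt r (\<lambda>j. w j - x i j) \<le> g i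
      \<and> g i \<le> row_wt r w \<and> row_wt r (x i) \<le> row_wt r w"
    using exists_row_raise g by blast
  then obtain v where v: "\<forall>i\<in>A. (\<forall>j. r \<le> j \<longrightarrow> v i j = x i j) \<and> row_wt r (\<lambda>j. v i j - x i j) \<le> g i
      \<and> g i \<le> row_wt r (v i) \<and> row_wt r (x i) \<le> row_wt r (v i)"
    by (rule bchoice[THEN exE])
  define c where "c i = (if i \<in> A then v i else x i)" for i
  have "c \<in> mats s r"
    using x A v unfolding mats_def c_def by auto
  moreover have "nrt_dist s r c x \<le> (\<Sum>i<s. if i \<in> A then g i else 0)"
    unfolding nrt_dist_def nrt_wt_def using v by (intro sum_mono) (simp add: c_def)
  moreover have "(\<Sum>i<s. if i \<in> A then g i else row_wt r (x i)) \<le> nrt_wt s r c"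
    unfolding nrt_wt_def using v by (intro sum_mono) (simp add: c_def)
  moreover have "{..<s} \<inter> A = A" "{..<s} \<inter> - A = {..<s} - A"
    using A by auto
  ultimately show ?thesis
    by (intro bexI[of _ c]) (simp_all add: sum.If_cases sum.inter_restrict)
qed

lemma exists_rows_to_raise:
  fixes k :: "nat \<Rightarrow> nat"
  assumes k: "R + 1 \<le> (\<Sum>i<s. k i)" and s: "R + 1 + m \<le> s" and m: "R \<le> r * m"
  shows "\<exists>A \<subseteq> {..<s}. R \<le> r * card A \<and> R + 1 \<le> (\<Sum>i \<in> {..<s} - A. k i)"
proof -
  define Z where "Z = {i \<in> {..<s}. k i = 0}"
  have Z: "Z \<subseteq> {..<s}" "finite Z"
    by (auto simp: Z_def)
  show ?thesis
  proof (cases "m \<le> card Z")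
    case True
    have "sum k {..<s} = sum k ({..<s} - Z) + sum k Z"
      using Z by (intro sum.subset_diff) auto
    moreover have "sum k Z = 0"
      by (simp add: Z_def)
    ultimately have "R + 1 \<le> (\<Sum>i \<in> {..<s} - Z. k i)"
      using k by simp
    moreover have "R \<le> r * card Z"
      using True m by (meson le_trans mult_le_mono2)
    ultimately show ?thesis
      using Z by blast
  next
    case False
    have "m - card Z \<le> card ({..<s} - Z)"
      using Z s by (simp add: card_Diff_subset)
    then obtain T where T: "T \<subseteq> {..<s} - Z" "card T = m - card Z"
      by (meson obtain_subset_with_card_n)
    define A where "A = Z \<union> T"
    have "card A = card Z + card T"
      unfolding A_def using Z T finite_subset[OF T(1)] by (intro card_Un_disjoint) auto
    then have A: "A \<subseteq> {..<s}" "card A = m"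
      using Z T False by (auto simp: A_def)
    have "of_nat (card ({..<s} - A)) * 1 \<le> (\<Sum>i \<in> {..<s} - A. k i)"
      by (rule sum_bounded_below) (auto simp: A_def Z_def)
    moreover have "card ({..<s} - A) = s - m"
      using A finite_subset[OF A(1)] by (simp add: card_Diff_subset)
    ultimately show ?thesis
      using A s m by (intro exI[of _ A]) auto
  qed
qed

lemma exists_far_center:
  fixes x :: "nat \<Rightarrow> nat \<Rightarrow> 'a::ring_1"
  assumes s: "R + 1 + m \<le> s" and m: "R \<le> r * m"
    and x: "x \<in> mats s r" "R + 1 \<le> nrt_wt s r x"
  shows "\<exists>c \<in> mats s r. nrt_dist s r c x \<le> R \<and> 2 * R + 1 \<le> nrt_wt s r c"
proof -
  obtain A where A: "A \<subseteq> {..<s}" "R \<le> r * card A"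
    and rest: "R + 1 \<le> (\<Sum>i \<in> {..<s} - A. row_wt r (x i))"
    using exists_rows_to_raise[OF _ s m] x(2) unfolding nrt_wt_def by blast
  obtain g where g: "\<forall>i\<in>A. g i \<le> r" "sum g A = R"
    using exists_sum_eq_bounded[OF finite_subset[OF A(1)] A(2)] by blast
  show ?thesis
    using exists_center_raising_rows[OF x(1) A(1) g(1)] g(2) rest by fastforce
qed

lemma delta_nonpos_imp_spare_rows:
  fixes s r R :: nat
  assumes "r > 0" and "(int r + 1) * (int R + 1) - int s * int r - 1 \<le> 0"
  obtains m where "R + 1 + m \<le> s" and "R \<le> r * m"
proof -
  have h: "r * R + r + R \<le> r * s"
    using assms(2) by (simp add: algebra_simps flip: of_nat_mult of_nat_add)
  have "R + 1 \<le> s"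
  proof (rule ccontr)
    assume "\<not> R + 1 \<le> s"
    then have "r * s \<le> r * R"
      by simp
    then show False
      using h assms(1) by linarith
  qed
  moreover have "r * (s - R - 1) = r * s - (r * R + r)"
    by (simp add: diff_mult_distrib2)
  ultimately show ?thesis
    using h that[of "s - R - 1"] by linarith
qed

theorem mainTheorem6:
  fixes s r R :: nat
  assumes "s > 0" and "r > 0" and "R > 0"
    and "(int r + 1) * (int R + 1) - int s * int r - 1 \<le> 0"
  shows "R_closed s r R (nrt_ball s r (\<lambda>i j. 0 :: 'a::{finite,field}) R)
    \<and> (\<forall>x \<in> mats s r. nrt_wt s r x \<ge> R + 1 \<longrightarrow>
         (\<exists>c \<in> mats s r. nrt_dist s r c x \<le> R
            \<and> nrt_ball s r c R \<inter> nrt_ball s r (\<lambda>i j. 0 :: 'a) R = {}))"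
proof -
  let ?B0 = "nrt_ball s r (\<lambda>i j. 0 :: 'a) R"
  have far: "\<exists>c \<in> mats s r. nrt_dist s r c x \<le> R \<and> nrt_ball s r c R \<inter> ?B0 = {}"
    if x: "x \<in> mats s r" "R + 1 \<le> nrt_wt s r x" for x
  proof -
    obtain m where "R + 1 + m \<le> s" "R \<le> r * m"
      using delta_nonpos_imp_spare_rows[OF assms(2,4)] .
    then obtain c where "c \<in> mats s r" "nrt_dist s r c x \<le> R" "2 * R + 1 \<le> nrt_wt s r c"
      using exists_far_center x by blast
    then show ?thesis
      using nrt_ball_disjoint[of R R s r c "\<lambda>i j. 0"] by auto
  qed
  moreover have "R_closed s r R ?B0"
  proof (rule R_closedI)
    show "?B0 \<subseteq> mats s r"
      by (auto simp: nrt_ball_def)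
    show "\<forall>x \<in> mats s r - ?B0. \<exists>c \<in> mats s r. nrt_dist s r c x \<le> R \<and> nrt_ball s r c R \<inter> ?B0 = {}"
      using far by (auto simp: nrt_ball_def not_le Suc_le_eq)
  qed
  ultimately show ?thesis by blast
qed

end
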